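(* Let $\hat a=a_1+a_2\varepsilon$ and $\hat b=b_1+b_2\varepsilon$ be dual complex numbers ($a_1,a_2,b_1,b_2\in\mathbb C$), and let $\hat q=q_1+q_2 j+(q_3+q_4 j)\varepsilon$ ($q_1,\dots,q_4\in\mathbb C$) be a unit dual quaternion such that $\hat q^*\hat a\hat q=\hat b$. Then $\hat a=\hat b$ or $\hat a=\overline{\hat b}$, where $\overline{\hat b}=\overline{b_1}+\overline{b_2}\varepsilon$.
   Context: $\mathbb{Q}$ denotes the real quaternions with units $i,j,k$; complex numbers are identified with quaternions $a+bi$ (so $jz=\bar z j$). $\varepsilon$ satisfies $\varepsilon\ne0$, $\varepsilon^2=0$ and commutes with quaternions. A dual quaternion is $\tilde p_{st}+\tilde p_{\mathcal I}\varepsilon$ with quaternions $\tilde p_{st},\tilde p_{\mathcal I}$, conjugate $\hat p^*=\tilde p_{st}^*+\tilde p_{\mathcal I}^*\varepsilon$. A dual quaternion $\hat p$ is unit if $|\hat p|=1$, where $|\hat p|=|\tilde p_{st}|+\frac{\mathrm{sc}(\tilde p_{st}^*\tilde p_{\mathcal I})}{|\tilde p_{st}|}\varepsilon$ for $\tilde p_{st}\ne0$ (and $|\tilde p_{\mathcal I}|\varepsilon$ otherwise), $\mathrm{sc}(\tilde p)=\frac12(\tilde p+\tilde p^* )$; equivalently $\hat p^*\hat p=\hat p\hat p^*=1$. *)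

theory Defs
  imports Complex_Main
begin

datatype quat = Quat (q_re: real) (q_i: real) (q_j: real) (q_k: real)

definition qadd :: "quat \<Rightarrow> quat \<Rightarrow> quat" where
  "qadd p q = Quat (q_re p + q_re q) (q_i p + q_i q) (q_j p + q_j q) (q_k p + q_k q)"

definition qmul :: "quat \<Rightarrow> quat \<Rightarrow> quat" where
  "qmul p q = Quat
     (q_re p * q_re q - q_i p * q_i q - q_j p * q_j q - q_k p * q_k q)
     (q_re p * q_i q + q_i p * q_re q + q_j p * q_k q - q_k p * q_j q)
     (q_re p * q_j q - q_i p * q_k q + q_j p * q_re q + q_k p * q_i q)
     (q_re p * q_k q + q_i p * q_j q - q_j p * q_i q + q_k p * q_re q)"

definition qcnj :: "quat \<Rightarrow> quat" where
  "qcnj p = Quat (q_re p) (- q_i p) (- q_j p) (- q_k p)"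

definition qone :: quat where "qone = Quat 1 0 0 0"
definition qzero :: quat where "qzero = Quat 0 0 0 0"
definition qj :: quat where "qj = Quat 0 0 1 0"

definition cq :: "complex \<Rightarrow> quat" where
  "cq z = Quat (Re z) (Im z) 0 0"

text \<open>Dual quaternions p_st + p_I \<epsilon>, as pairs (p_st, p_I).\<close>
type_synonym dquat = "quat \<times> quat"

definition dmul :: "dquat \<Rightarrow> dquat \<Rightarrow> dquat" where
  "dmul p q = (qmul (fst p) (fst q), qadd (qmul (fst p) (snd q)) (qmul (snd p) (fst q)))"

definition dcnj :: "dquat \<Rightarrow> dquat" where
  "dcnj p = (qcnj (fst p), qcnj (snd p))"

definition dquat_one :: dquat where "dquat_one = (qone, qzero)"

definition dunit :: "dquat \<Rightarrow> bool" where
  "dunit p \<longleftrightarrow> dmul (dcnj p) p = dquat_one \<and> dmul p (dcnj p) = dquat_one"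

definition dcx :: "complex \<Rightarrow> complex \<Rightarrow> dquat" where
  "dcx a1 a2 = (cq a1, cq a2)"

end

theory Submission
  imports Defs
begin

text \<open>Write quaternions as \<open>z + w j\<close> with complex \<open>z, w\<close>, so that \<open>j z = cnj z j\<close>.
  For \<open>q = (u + v j) + (u' + v' j)\<epsilon>\<close>, the standard part of \<open>q\<^sup>* a q\<close> is
  \<open>|u|\<^sup>2 a\<^sub>1 + |v|\<^sup>2 cnj a\<^sub>1 + cnj u v (a\<^sub>1 - cnj a\<^sub>1) j\<close>, and its dual part is computed
  alike. If the result is complex then \<open>u = 0\<close>, \<open>v = 0\<close> or \<open>a\<^sub>1\<close> is real. For \<open>v = 0\<close>
  (resp. \<open>u = 0\<close>) the unit condition kills the cross terms of the dual part and the
  sandwich is \<open>a\<close> (resp. its conjugate); otherwise the \<open>j\<close>-part of the dual part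
  forces \<open>a\<^sub>2\<close> to be real as well, so \<open>a\<close> is central and \<open>q\<^sup>* a q = q\<^sup>* q a = a\<close>.\<close>

definition qpair :: "complex \<Rightarrow> complex \<Rightarrow> quat" where
  "qpair z w = Quat (Re z) (Im z) (Re w) (Im w)"

lemma qadd_cq_qmul_qj: "qadd (cq z) (qmul (cq w) qj) = qpair z w"
  by (simp add: qpair_def qadd_def qmul_def cq_def qj_def)

lemma qpair_eq_iff: "qpair z w = qpair z' w' \<longleftrightarrow> z = z' \<and> w = w'"
  by (auto simp: qpair_def complex_eq_iff)

lemma cq_eq_qpair: "cq z = qpair z 0"
  by (simp add: qpair_def cq_def)

lemma dcx_eq_qpair: "dcx z w = (qpair z 0, qpair w 0)"
  by (simp add: dcx_def cq_eq_qpair)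

lemma dquat_one_eq_qpair: "dquat_one = (qpair 1 0, qpair 0 0)"
  by (simp add: dquat_one_def qone_def qzero_def qpair_def)

lemma qadd_qpair: "qadd (qpair z w) (qpair z' w') = qpair (z + z') (w + w')"
  by (simp add: qpair_def qadd_def)

lemma qmul_qpair: "qmul (qpair z w) (qpair z' w') = qpair (z * z' - w * cnj w') (z * w' + w * cnj z')"
  by (simp add: qpair_def qmul_def algebra_simps)

lemma qcnj_qpair: "qcnj (qpair z w) = qpair (cnj z) (- w)"
  by (simp add: qpair_def qcnj_def)

lemmas qpair_arith = qadd_qpair qmul_qpair qcnj_qpair

lemma dcnj_dmul_self_qpair:
  "dmul (dcnj (qpair u v, qpair u' v')) (qpair u v, qpair u' v') =
     (qpair (of_real (norm u ^ 2 + norm v ^ 2)) 0, qpair (of_real (2 * Re (cnj u * u' + v * cnj v'))) 0)"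
  unfolding cmod_power2
  by (simp add: dmul_def dcnj_def qpair_arith qpair_eq_iff complex_eq_iff power2_eq_square algebra_simps)

lemma dunit_qpairD:
  assumes "dunit (qpair u v, qpair u' v')"
  shows "norm u ^ 2 + norm v ^ 2 = 1" and "Re (cnj u * u' + v * cnj v') = 0"
  using assms
  unfolding dunit_def dcnj_dmul_self_qpair dquat_one_eq_qpair prod.inject qpair_eq_iff
  by (simp_all only: of_real_eq_1_iff of_real_eq_0_iff) simp_all

lemma dcx_sandwich_qpair:
  "dmul (dmul (dcnj (qpair u v, qpair u' v')) (dcx a1 a2)) (qpair u v, qpair u' v') =
     (qpair (of_real (norm u ^ 2) * a1 + of_real (norm v ^ 2) * cnj a1)
            (cnj u * v * (a1 - cnj a1)),
      qpair (of_real (2 * Re (cnj u * u')) * a1 + of_real (2 * Re (v * cnj v')) * cnj a1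
               + of_real (norm u ^ 2) * a2 + of_real (norm v ^ 2) * cnj a2)
            ((a1 - cnj a1) * (cnj u * v' + cnj u' * v) + cnj u * v * (a2 - cnj a2)))"
  unfolding complex_norm_square complex_add_cnj [symmetric]
  by (simp add: dmul_def dcnj_def dcx_eq_qpair qpair_arith qpair_eq_iff algebra_simps)

lemma dual_complex_sandwich_cases:
  fixes u v u' v' a1 a2 b1 b2 :: complex
  assumes norm: "norm u ^ 2 + norm v ^ 2 = 1"
    and orth: "Re (cnj u * u' + v * cnj v') = 0"
    and std_re: "of_real (norm u ^ 2) * a1 + of_real (norm v ^ 2) * cnj a1 = b1"
    and std_j: "cnj u * v * (a1 - cnj a1) = 0"
    and dual_re: "of_real (2 * Re (cnj u * u')) * a1 + of_real (2 * Re (v * cnj v')) * cnj a1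
                    + of_real (norm u ^ 2) * a2 + of_real (norm v ^ 2) * cnj a2 = b2"
    and dual_j: "(a1 - cnj a1) * (cnj u * v' + cnj u' * v) + cnj u * v * (a2 - cnj a2) = 0"
  shows "(a1 = b1 \<and> a2 = b2) \<or> (a1 = cnj b1 \<and> a2 = cnj b2)"
proof -
  consider "u = 0" | "v = 0" | "u \<noteq> 0" "v \<noteq> 0"
    by blast
  then show ?thesis
  proof cases
    case 1
    then have "norm v ^ 2 = 1" "Re (v * cnj v') = 0"
      using norm orth by simp_all
    then have "b1 = cnj a1" "b2 = cnj a2"
      using std_re dual_re 1 by simp_all
    then show ?thesis
      by simp
  next
    case 2
    then have "norm u ^ 2 = 1" "Re (cnj u * u') = 0"
      using norm orth by simp_all
    then have "b1 = a1" "b2 = a2"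
      using std_re dual_re 2 by simp_all
    then show ?thesis
      by simp
  next
    case 3
    then have a1_real: "cnj a1 = a1"
      using std_j by simp
    with 3 have "cnj a2 = a2"
      using dual_j by simp
    with a1_real have "b1 = of_real (norm u ^ 2 + norm v ^ 2) * a1"
      and "b2 = of_real (2 * Re (cnj u * u' + v * cnj v')) * a1 + of_real (norm u ^ 2 + norm v ^ 2) * a2"
      using std_re dual_re by (simp_all add: algebra_simps)
    then show ?thesis
      unfolding norm orth by simp
  qed
qed

theorem lemma3p4:
  fixes a1 a2 b1 b2 q1 q2 q3 q4 :: complex
  assumes "dunit (qadd (cq q1) (qmul (cq q2) qj), qadd (cq q3) (qmul (cq q4) qj))"
    and "dmul (dmul (dcnj (qadd (cq q1) (qmul (cq q2) qj), qadd (cq q3) (qmul (cq q4) qj)))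
                    (dcx a1 a2))
              (qadd (cq q1) (qmul (cq q2) qj), qadd (cq q3) (qmul (cq q4) qj)) = dcx b1 b2"
  shows "dcx a1 a2 = dcx b1 b2 \<or> dcx a1 a2 = dcx (cnj b1) (cnj b2)"
proof -
  let ?q = "(qpair q1 q2, qpair q3 q4)"
  have unit: "dunit ?q" and sandwich: "dmul (dmul (dcnj ?q) (dcx a1 a2)) ?q = dcx b1 b2"
    using assms unfolding qadd_cq_qmul_qj .
  have "(a1 = b1 \<and> a2 = b2) \<or> (a1 = cnj b1 \<and> a2 = cnj b2)"
    using sandwich unfolding dcx_sandwich_qpair dcx_eq_qpair [of b1 b2] prod.inject qpair_eq_iff
    by (elim conjE) (rule dual_complex_sandwich_cases [OF dunit_qpairD [OF unit]])
  then show ?thesis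
    by auto
qed

end
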